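(* Let $\pi:L_{\mathcal F}\to L_{\mathcal G}$ satisfy (REG). For every finite partition $\Gamma$ of $\Omega$ into $\mathcal G$-measurable sets, every $X\in L_{\mathcal F}$ and $Q\in L^*_{\mathcal F}\cap\mathcal P$, the set \[\mathcal A^\Gamma_Q(X):=\{\pi^\Gamma(\xi)\mid \xi\in L_{\mathcal F},\ E_Q[\xi\mid\mathcal G]\ge_Q E_Q[X\mid\mathcal G]\}\] is downward directed; hence there exists a sequence $(\eta^Q_m)_{m\ge1}\subseteq L_{\mathcal F}$ with $E_Q[\eta^Q_m\mid\mathcal G]\ge_Q E_Q[X\mid\mathcal G]$ for all $m$ and $\pi^\Gamma(\eta^Q_m)\downarrow K^\Gamma(X,Q)$ as $m\uparrow\infty$.
   Context: Let $(\Omega,\mathcal F,\mathbb P)$ be a probability space and $\mathcal G\subseteq\mathcal F$ a sub-$\sigma$-algebra. (In)equalities hold $\mathbb P$-a.s. unless a measure is indicated ($\ge_Q$: $Q$-a.s.); $\inf$ is the $\mathbb P$-essential infimum. $L_{\mathcal F}\subseteq L^0(\Omega,\mathcal F,\mathbb P)$, $L_{\mathcal G}\subseteq L^0(\Omega,\mathcal G,\mathbb P)$ are vector lattices closed under multiplication by indicators of $\mathcal F$- (resp. $\mathcal G$-) measurable sets; the order continuous dual $L^*_{\mathcal F}$ of $(L_{\mathcal F},\ge)$ is a lattice contained in $L^1(\Omega,\mathcal F,\mathbb P)$ (functionals $X\mapsto E_{\mathbb P}[ZX]$), closed under multiplication by indicators of sets in $\mathcal F$. $\mathcal P$ = densities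 of probabilities $Q\ll\mathbb P$. (REG): $\pi(X\mathbf 1_A+Y\mathbf 1_{A^c})=\pi(X)\mathbf 1_A+\pi(Y)\mathbf 1_{A^c}$ for $A\in\mathcal G$. For $A\in\mathcal G$, $\pi_A(X):=\operatorname{ess\,sup}_{\omega\in A}\pi(X)(\omega)$; $\pi^\Gamma(X):=\sum_{A\in\Gamma}\pi_A(X)\mathbf 1_A$; $K^\Gamma(X,Q):=\inf\mathcal A^\Gamma_Q(X)$. A set of random variables is downward directed if any two elements have a common lower bound in the set. *)

theory Defs
  imports "HOL-Probability.Probability"
begin

text \<open>Random variables are represented by functions; (in)equalities between random
variables are understood almost surely.\<close>

definition ind_vector_lattice :: "'a measure \<Rightarrow> 'a set set \<Rightarrow> ('a \<Rightarrow> real) set \<Rightarrow> bool" where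
  "ind_vector_lattice M S L \<longleftrightarrow>
     L \<subseteq> measurable (measure_of (space M) S (\<lambda>_. 0)) borel \<and>
     (\<lambda>_. 0) \<in> L \<and>
     (\<forall>X\<in>L. \<forall>Y\<in>L. (\<lambda>\<omega>. X \<omega> + Y \<omega>) \<in> L) \<and>
     (\<forall>X\<in>L. \<forall>c::real. (\<lambda>\<omega>. c * X \<omega>) \<in> L) \<and>
     (\<forall>X\<in>L. \<forall>Y\<in>L. (\<lambda>\<omega>. max (X \<omega>) (Y \<omega>)) \<in> L) \<and>
     (\<forall>X\<in>L. \<forall>A\<in>S. (\<lambda>\<omega>. indicator A \<omega> * X \<omega>) \<in> L)"

definition down_directed :: "'a measure \<Rightarrow> ('a \<Rightarrow> 'b::order) set \<Rightarrow> bool" where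
  "down_directed M S \<longleftrightarrow>
     (\<forall>a\<in>S. \<forall>b\<in>S. \<exists>c\<in>S. (AE \<omega> in M. c \<omega> \<le> a \<omega>) \<and> (AE \<omega> in M. c \<omega> \<le> b \<omega>))"

text \<open>Order continuous dual of \<open>(L,\<ge>)\<close>, represented by densities Z (functional
  \<open>X \<mapsto> E[Z X]\<close>): Z is integrable, Z X is integrable for each X in L, and
  \<open>E[Z X\<^sub>\<alpha>] \<rightarrow> 0\<close> along every downward directed family in L with infimum 0 in L
  (the family viewed as a net indexed by itself).\<close>
definition order_cont_dual :: "'a measure \<Rightarrow> ('a \<Rightarrow> real) set \<Rightarrow> ('a \<Rightarrow> real) set" where
  "order_cont_dual M L = {Z. Z \<in> borel_measurable M \<and> integrable M Z \<and>
     (\<forall>X\<in>L. integrable M (\<lambda>\<omega>. Z \<omega> * X \<omega>)) \<and>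
     (\<forall>D. D \<subseteq> L \<and> D \<noteq> {} \<and> down_directed M D \<and>
          (\<forall>X\<in>D. AE \<omega> in M. 0 \<le> X \<omega>) \<and>
          (\<forall>Y\<in>L. (\<forall>X\<in>D. AE \<omega> in M. Y \<omega> \<le> X \<omega>) \<longrightarrow> (AE \<omega> in M. Y \<omega> \<le> 0))
        \<longrightarrow> (\<forall>e>0. \<exists>X0\<in>D. \<forall>X\<in>D. (AE \<omega> in M. X \<omega> \<le> X0 \<omega>) \<longrightarrow>
               \<bar>\<integral>\<omega>. Z \<omega> * X \<omega> \<partial>M\<bar> < e))}"

text \<open>Densities of probability measures absolutely continuous w.r.t. M.\<close>
definition prob_densities :: "'a measure \<Rightarrow> ('a \<Rightarrow> real) set" where
  "prob_densities M = {Z. Z \<in> borel_measurable M \<and> (\<forall>\<omega>\<in>space M. 0 \<le> Z \<omega>) \<and>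
      integrable M Z \<and> (\<integral>\<omega>. Z \<omega> \<partial>M) = 1}"

definition ess_sup_on :: "'a measure \<Rightarrow> 'a set \<Rightarrow> ('a \<Rightarrow> real) \<Rightarrow> ereal" where
  "ess_sup_on M A f = Inf {z. AE \<omega> in M. \<omega> \<in> A \<longrightarrow> ereal (f \<omega>) \<le> z}"

definition pi_Gamma :: "'a measure \<Rightarrow> 'a set set \<Rightarrow> (('a \<Rightarrow> real) \<Rightarrow> ('a \<Rightarrow> real))
    \<Rightarrow> ('a \<Rightarrow> real) \<Rightarrow> 'a \<Rightarrow> ereal" where
  "pi_Gamma M \<Gamma> \<pi> X \<omega> = (\<Sum>A\<in>\<Gamma>. if \<omega> \<in> A then ess_sup_on M A (\<pi> X) else 0)"

definition acc_set :: "'a measure \<Rightarrow> 'a measure \<Rightarrow> ('a \<Rightarrow> real) set \<Rightarrow> 'a set set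
    \<Rightarrow> (('a \<Rightarrow> real) \<Rightarrow> ('a \<Rightarrow> real)) \<Rightarrow> ('a \<Rightarrow> real) \<Rightarrow> ('a \<Rightarrow> real) \<Rightarrow> ('a \<Rightarrow> ereal) set" where
  "acc_set M G L \<Gamma> \<pi> X Q = {pi_Gamma M \<Gamma> \<pi> \<xi> | \<xi>. \<xi> \<in> L \<and>
     (AE \<omega> in density M Q. real_cond_exp (density M Q) G \<xi> \<omega> \<ge> real_cond_exp (density M Q) G X \<omega>)}"

definition is_ess_inf :: "'a measure \<Rightarrow> ('a \<Rightarrow> ereal) set \<Rightarrow> ('a \<Rightarrow> ereal) \<Rightarrow> bool" where
  "is_ess_inf M S K \<longleftrightarrow> K \<in> borel_measurable M \<and>
     (\<forall>Y\<in>S. AE \<omega> in M. K \<omega> \<le> Y \<omega>) \<and>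
     (\<forall>K'. K' \<in> borel_measurable M \<and> (\<forall>Y\<in>S. AE \<omega> in M. K' \<omega> \<le> Y \<omega>) \<longrightarrow>
        (AE \<omega> in M. K' \<omega> \<le> K \<omega>))"

end

theory Submission
  imports Defs
begin

text \<open>On each cell \<open>B\<close> of \<open>\<Gamma>\<close> the function \<open>\<pi>\<^sup>\<Gamma>(\<xi>)\<close> is the constant \<open>\<pi>\<^sub>B(\<xi>)\<close>, so an element of
  \<open>\<A>\<^sup>\<Gamma>\<^sub>Q(X)\<close> is a vector of finitely many extended reals indexed by \<open>\<Gamma>\<close>. Given two admissible
  \<open>\<xi>\<^sub>1, \<xi>\<^sub>2\<close>, let \<open>A\<close> be the union of the cells on which \<open>\<pi>\<^sub>B(\<xi>\<^sub>1) \<le> \<pi>\<^sub>B(\<xi>\<^sub>2)\<close> and paste \<open>\<xi>\<^sub>1\<close> on \<open>A\<close>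
  with \<open>\<xi>\<^sub>2\<close> off \<open>A\<close>. Since \<open>A \<in> \<G>\<close>, conditional expectations paste along \<open>A\<close>, so the result is
  admissible, and by (REG) its cell values are the minima of those of \<open>\<xi>\<^sub>1\<close> and \<open>\<xi>\<^sub>2\<close>; this is
  directedness. Because \<open>\<Gamma>\<close> is finite, directedness lets one decreasing sequence of admissible
  elements approximate all cellwise infima at once, and the cellwise infimum is then the
  essential infimum \<open>K\<^sup>\<Gamma>(X,Q)\<close>.\<close>

lemma sum_if_mem_disjoint_family:
  fixes h :: "'a set \<Rightarrow> 'b::comm_monoid_add"
  assumes "finite \<Gamma>" "disjoint \<Gamma>" "B \<in> \<Gamma>" "\<omega> \<in> B"
  shows "(\<Sum>A\<in>\<Gamma>. if \<omega> \<in> A then h A else 0) = h B"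
proof -
  have "(\<Sum>A\<in>\<Gamma>. if \<omega> \<in> A then h A else 0) = (\<Sum>A\<in>\<Gamma>. if A = B then h A else 0)"
    using assms by (intro sum.cong) (auto simp: pairwise_def disjnt_def)
  also have "\<dots> = h B"
    using assms(1,3) by (simp add: sum.delta)
  finally show ?thesis .
qed

lemma pi_Gamma_eq_ess_sup_on:
  assumes "finite \<Gamma>" "disjoint \<Gamma>" "B \<in> \<Gamma>" "\<omega> \<in> B"
  shows "pi_Gamma M \<Gamma> \<pi> \<xi> \<omega> = ess_sup_on M B (\<pi> \<xi>)"
  unfolding pi_Gamma_def by (rule sum_if_mem_disjoint_family[OF assms])

lemma ess_sup_on_cong:
  assumes "AE \<omega> in M. \<omega> \<in> B \<longrightarrow> f \<omega> = g \<omega>"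
  shows "ess_sup_on M B f = ess_sup_on M B g"
proof -
  have "(AE \<omega> in M. \<omega> \<in> B \<longrightarrow> ereal (f \<omega>) \<le> z) \<longleftrightarrow> (AE \<omega> in M. \<omega> \<in> B \<longrightarrow> ereal (g \<omega>) \<le> z)" for z
    using assms by (intro iffI) (erule AE_mp, auto elim: AE_mp)+
  then show ?thesis
    unfolding ess_sup_on_def by simp
qed

lemma ess_sup_on_paste_cells:
  assumes "disjoint \<Gamma>" "B \<in> \<Gamma>"
    and paste: "AE \<omega> in M. g \<omega> =
      (if \<omega> \<in> \<Union>{C\<in>\<Gamma>. ess_sup_on M C f \<le> ess_sup_on M C h} then f \<omega> else h \<omega>)"
  shows "ess_sup_on M B g = min (ess_sup_on M B f) (ess_sup_on M B h)"
proof (cases "ess_sup_on M B f \<le> ess_sup_on M B h")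
  case True
  then have "AE \<omega> in M. \<omega> \<in> B \<longrightarrow> g \<omega> = f \<omega>"
    using paste by eventually_elim (use True assms(2) in auto)
  then show ?thesis
    using True by (simp add: ess_sup_on_cong)
next
  case False
  then have disj: "B \<inter> \<Union>{C\<in>\<Gamma>. ess_sup_on M C f \<le> ess_sup_on M C h} = {}"
    using assms(1,2) by (auto simp: pairwise_def disjnt_def) (metis IntI empty_iff)
  have "AE \<omega> in M. \<omega> \<in> B \<longrightarrow> g \<omega> = h \<omega>"
    using paste by eventually_elim (use disj in auto)
  then show ?thesis
    using False by (simp add: ess_sup_on_cong)
qed

lemma ind_vector_lattice_measurable:
  assumes "ind_vector_lattice M (sets M) L" "Y \<in> L"
  shows "Y \<in> borel_measurable M"
proof -
  have "Y \<in> measurable (measure_of (space M) (sets M) (\<lambda>_. 0)) borel"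
    using assms unfolding ind_vector_lattice_def by blast
  then show ?thesis
    by (simp add: measurable_def sets.sets_measure_of_eq sets.space_closed)
qed

lemma ind_vector_lattice_paste:
  assumes "ind_vector_lattice M S L" "Y \<in> L" "Z \<in> L" "A \<in> S"
  shows "(\<lambda>\<omega>. if \<omega> \<in> A then Y \<omega> else Z \<omega>) \<in> L"
proof -
  have add: "\<And>U V. U \<in> L \<Longrightarrow> V \<in> L \<Longrightarrow> (\<lambda>\<omega>. U \<omega> + V \<omega>) \<in> L"
    and scale: "\<And>U c. U \<in> L \<Longrightarrow> (\<lambda>\<omega>. c * U \<omega>) \<in> L"
    and ind: "\<And>U. U \<in> L \<Longrightarrow> (\<lambda>\<omega>. indicator A \<omega> * U \<omega>) \<in> L"
    using assms(1,4) unfolding ind_vector_lattice_def by simp_all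
  have "(\<lambda>\<omega>. Z \<omega> + indicator A \<omega> * (Y \<omega> + (-1) * Z \<omega>)) \<in> L"
    using assms(2,3) by (intro add ind scale)
  moreover have "(\<lambda>\<omega>. Z \<omega> + indicator A \<omega> * (Y \<omega> + (-1) * Z \<omega>)) = (\<lambda>\<omega>. if \<omega> \<in> A then Y \<omega> else Z \<omega>)"
    by (auto simp: indicator_def)
  ultimately show ?thesis
    by simp
qed

lemma finite_measure_density_prob_densities:
  assumes "Q \<in> prob_densities M"
  shows "finite_measure (density M Q)"
proof (rule finite_measureI)
  have Q: "Q \<in> borel_measurable M" "\<forall>\<omega>\<in>space M. 0 \<le> Q \<omega>" "integrable M Q" "(\<integral>\<omega>. Q \<omega> \<partial>M) = 1"
    using assms by (auto simp: prob_densities_def)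
  have "emeasure (density M Q) (space M) = (\<integral>\<^sup>+\<omega>. ennreal (Q \<omega>) \<partial>M)"
    using Q(1) by (simp add: emeasure_density indicator_def cong: nn_integral_cong)
  also have "\<dots> = 1"
    using Q by (subst nn_integral_eq_integral) (auto intro: AE_I2)
  finally show "emeasure (density M Q) (space (density M Q)) \<noteq> \<infinity>"
    by simp
qed

lemma sigma_finite_subalgebra_density:
  assumes "subalgebra M G" "Q \<in> prob_densities M"
  shows "sigma_finite_subalgebra (density M Q) G"
proof -
  interpret finite_measure "density M Q"
    using assms(2) by (rule finite_measure_density_prob_densities)
  show ?thesis
    using assms(1) by (intro finite_measure_subalgebra_is_sigma_finite)
      (unfold_locales, auto simp: subalgebra_def)
qed

lemma real_cond_exp_paste:
  assumes "sigma_finite_subalgebra N G" "A \<in> sets G" "integrable N f" "integrable N g"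
  shows "AE x in N. real_cond_exp N G (\<lambda>\<omega>. if \<omega> \<in> A then f \<omega> else g \<omega>) x
    = (if x \<in> A then real_cond_exp N G f x else real_cond_exp N G g x)"
proof -
  interpret sigma_finite_subalgebra N G by fact
  have A: "A \<in> sets N"
    using subalg assms(2) by (auto simp: subalgebra_def)
  have int_diff: "integrable N (\<lambda>\<omega>. f \<omega> - g \<omega>)"
    using assms(3,4) by simp
  have int_ind: "integrable N (\<lambda>\<omega>. indicator A \<omega> * (f \<omega> - g \<omega>))"
    using integrable_mult_indicator[OF A int_diff] by simp
  have paste: "(\<lambda>\<omega>. if \<omega> \<in> A then f \<omega> else g \<omega>) = (\<lambda>\<omega>. g \<omega> + indicator A \<omega> * (f \<omega> - g \<omega>))"
    by (auto simp: indicator_def)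
  have "AE x in N. real_cond_exp N G (\<lambda>\<omega>. g \<omega> + indicator A \<omega> * (f \<omega> - g \<omega>)) x
      = real_cond_exp N G g x + real_cond_exp N G (\<lambda>\<omega>. indicator A \<omega> * (f \<omega> - g \<omega>)) x"
    using assms(4) int_ind by (rule real_cond_exp_add)
  moreover have "AE x in N. real_cond_exp N G (\<lambda>\<omega>. indicator A \<omega> * (f \<omega> - g \<omega>)) x
      = indicator A x * real_cond_exp N G (\<lambda>\<omega>. f \<omega> - g \<omega>) x"
    using assms(2) int_diff int_ind by (intro real_cond_exp_mult) auto
  moreover have "AE x in N. real_cond_exp N G (\<lambda>\<omega>. f \<omega> - g \<omega>) x
      = real_cond_exp N G f x - real_cond_exp N G g x"
    using assms(3,4) by (rule real_cond_exp_diff)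
  ultimately show ?thesis
    unfolding paste by eventually_elim (auto simp: indicator_def)
qed

lemma directed_finite_lower_bound:
  fixes v :: "'i \<Rightarrow> 'b \<Rightarrow> 'c::order"
  assumes directed: "\<And>x y. P x \<Longrightarrow> P y \<Longrightarrow> \<exists>z. P z \<and> (\<forall>i\<in>I. v i z \<le> v i x \<and> v i z \<le> v i y)"
    and "finite F" "F \<noteq> {}" "\<forall>x\<in>F. P x"
  shows "\<exists>z. P z \<and> (\<forall>i\<in>I. \<forall>x\<in>F. v i z \<le> v i x)"
  using assms(2-4)
proof (induction F rule: finite_ne_induct)
  case (singleton x)
  then show ?case by auto
next
  case (insert x F)
  then obtain z where z: "P z" "\<forall>i\<in>I. \<forall>y\<in>F. v i z \<le> v i y"
    by auto
  moreover obtain z' where "P z'" "\<forall>i\<in>I. v i z' \<le> v i z \<and> v i z' \<le> v i x"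
    using directed[OF z(1), of x] insert.prems by auto
  ultimately show ?case
    by (intro exI[of _ z']) (blast intro: order_trans)
qed

lemma INF_approx_sequence:
  fixes v :: "'b \<Rightarrow> ereal"
  assumes "S \<noteq> {}"
  obtains g where "\<And>m. g m \<in> S" "(\<lambda>m. v (g m)) \<longlonglongrightarrow> (INF x\<in>S. v x)"
proof -
  obtain f where f: "decseq f" "range f \<subseteq> v ` S" "(INF x\<in>S. v x) = (INF m. f m)"
    using Inf_countable_INF[of "v ` S"] assms by blast
  define g where "g m = (SOME x. x \<in> S \<and> v x = f m)" for m
  have g: "g m \<in> S \<and> v (g m) = f m" for m
  proof -
    have "f m \<in> v ` S"
      using f(2) by blast
    then show ?thesis
      unfolding g_def by (rule imageE) (rule someI, auto)
  qed
  show thesis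
  proof
    show "g m \<in> S" for m
      using g by blast
    show "(\<lambda>m. v (g m)) \<longlonglongrightarrow> (INF x\<in>S. v x)"
      unfolding f(3) using LIMSEQ_INF[OF f(1)] g by simp
  qed
qed

lemma directed_decreasing_approximation:
  fixes v :: "'i \<Rightarrow> 'b \<Rightarrow> ereal"
  assumes "finite I" "P x\<^sub>0"
    and directed: "\<And>x y. P x \<Longrightarrow> P y \<Longrightarrow> \<exists>z. P z \<and> (\<forall>i\<in>I. v i z \<le> v i x \<and> v i z \<le> v i y)"
  obtains \<eta> where "\<And>m. P (\<eta> m)"
    and "\<And>i. i \<in> I \<Longrightarrow> decseq (\<lambda>m. v i (\<eta> m))"
    and "\<And>i. i \<in> I \<Longrightarrow> (\<lambda>m. v i (\<eta> m)) \<longlonglongrightarrow> (INF x\<in>Collect P. v i x)"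
proof -
  have "\<forall>i. \<exists>g. (\<forall>m. P (g m)) \<and> (\<lambda>m. v i (g m)) \<longlonglongrightarrow> (INF x\<in>Collect P. v i x)"
    using assms(2) by (metis INF_approx_sequence empty_iff mem_Collect_eq)
  then obtain g where g: "\<And>i m. P (g i m)" "\<And>i. (\<lambda>m. v i (g i m)) \<longlonglongrightarrow> (INF x\<in>Collect P. v i x)"
    by metis
  define lb where "lb F = (SOME z. P z \<and> (\<forall>i\<in>I. \<forall>x\<in>F. v i z \<le> v i x))" for F
  have lb: "P (lb F) \<and> (\<forall>i\<in>I. \<forall>x\<in>F. v i (lb F) \<le> v i x)"
    if "finite F" "F \<noteq> {}" "\<forall>x\<in>F. P x" for F
    unfolding lb_def by (rule someI_ex, rule directed_finite_lower_bound[OF directed that])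
  \<comment> \<open>Each step lies below its predecessor and below the \<open>m\<close>-th approximant of every cell.\<close>
  define \<eta> where "\<eta> = rec_nat x\<^sub>0 (\<lambda>m y. lb (insert y ((\<lambda>i. g i m) ` I)))"
  have \<eta>_Suc: "\<eta> (Suc m) = lb (insert (\<eta> m) ((\<lambda>i. g i m) ` I))" for m
    by (simp add: \<eta>_def)
  have P_\<eta>: "P (\<eta> m)" for m
    by (induction m) (use assms(1,2) g(1) lb in \<open>auto simp: \<eta>_def\<close>)
  have step: "v i (\<eta> (Suc m)) \<le> v i (\<eta> m) \<and> v i (\<eta> (Suc m)) \<le> v i (g i m)" if "i \<in> I" for i m
  proof -
    have "\<forall>j\<in>I. \<forall>x\<in>insert (\<eta> m) ((\<lambda>i. g i m) ` I). v j (\<eta> (Suc m)) \<le> v j x"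
      unfolding \<eta>_Suc using assms(1) P_\<eta> g(1) by (intro lb[THEN conjunct2]) auto
    then show ?thesis
      using that by blast
  qed
  have inf_le: "(INF x\<in>Collect P. v i x) \<le> v i (\<eta> m)" for i m
    using P_\<eta> by (auto intro: INF_lower)
  show thesis
  proof
    show "P (\<eta> m)" for m
      by (rule P_\<eta>)
    show "decseq (\<lambda>m. v i (\<eta> m))" if "i \<in> I" for i
      using step[OF that] by (intro decseq_SucI) auto
    show "(\<lambda>m. v i (\<eta> m)) \<longlonglongrightarrow> (INF x\<in>Collect P. v i x)" if "i \<in> I" for i
    proof -
      have "(\<lambda>m. v i (\<eta> (Suc m))) \<longlonglongrightarrow> (INF x\<in>Collect P. v i x)"
        by (rule tendsto_sandwich[rotated 2, OF tendsto_const g(2)]) (use inf_le step[OF that] in auto)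
      then show ?thesis
        by (rule LIMSEQ_imp_Suc)
    qed
  qed
qed

locale regular_partition_setting =
  fixes M G :: "'a measure"
    and L :: "('a \<Rightarrow> real) set"
    and \<pi> :: "('a \<Rightarrow> real) \<Rightarrow> ('a \<Rightarrow> real)"
    and \<Gamma> :: "'a set set"
    and X Q :: "'a \<Rightarrow> real"
  assumes subalg: "subalgebra M G"
    and lattice: "ind_vector_lattice M (sets M) L"
    and regular: "\<forall>Y\<in>L. \<forall>Z\<in>L. \<forall>A\<in>sets G. AE \<omega> in M.
       \<pi> (\<lambda>\<omega>'. if \<omega>' \<in> A then Y \<omega>' else Z \<omega>') \<omega> = (if \<omega> \<in> A then \<pi> Y \<omega> else \<pi> Z \<omega>)"
    and finite_partition: "finite \<Gamma>"
    and partition_sets: "\<Gamma> \<subseteq> sets G"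
    and partition_disjoint: "disjoint \<Gamma>"
    and partition_covers: "\<Union>\<Gamma> = space M"
    and X_in: "X \<in> L"
    and density: "Q \<in> prob_densities M"
    and integrable_density_mult: "\<forall>Y\<in>L. integrable M (\<lambda>\<omega>. Q \<omega> * Y \<omega>)"
      \<comment> \<open>the only consequence of \<open>Q \<in> L\<^sup>*\<^sub>\<F>\<close> that the argument needs\<close>
begin

abbreviation MQ :: "'a measure" where
  "MQ \<equiv> density M (\<lambda>\<omega>. ennreal (Q \<omega>))"

definition admissible :: "('a \<Rightarrow> real) \<Rightarrow> bool" where
  "admissible \<xi> \<longleftrightarrow> \<xi> \<in> L \<and> (AE \<omega> in MQ. real_cond_exp MQ G X \<omega> \<le> real_cond_exp MQ G \<xi> \<omega>)"

definition cell_inf :: "'a set \<Rightarrow> ereal" where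
  "cell_inf B = (INF \<xi>\<in>Collect admissible. ess_sup_on M B (\<pi> \<xi>))"

definition acc_inf :: "'a \<Rightarrow> ereal" where
  "acc_inf \<omega> = (\<Sum>B\<in>\<Gamma>. if \<omega> \<in> B then cell_inf B else 0)"

lemma acc_set_eq: "acc_set M G L \<Gamma> \<pi> X Q = pi_Gamma M \<Gamma> \<pi> ` Collect admissible"
  unfolding acc_set_def admissible_def by auto

lemma admissible_X: "admissible X"
  using X_in by (auto simp: admissible_def intro: AE_I2)

lemma pi_Gamma_cell: "B \<in> \<Gamma> \<Longrightarrow> \<omega> \<in> B \<Longrightarrow> pi_Gamma M \<Gamma> \<pi> \<xi> \<omega> = ess_sup_on M B (\<pi> \<xi>)"
  using finite_partition partition_disjoint by (rule pi_Gamma_eq_ess_sup_on)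

lemma acc_inf_cell: "B \<in> \<Gamma> \<Longrightarrow> \<omega> \<in> B \<Longrightarrow> acc_inf \<omega> = cell_inf B"
  unfolding acc_inf_def using finite_partition partition_disjoint by (rule sum_if_mem_disjoint_family)

lemma in_some_cell:
  assumes "\<omega> \<in> space M"
  obtains B where "B \<in> \<Gamma>" "\<omega> \<in> B"
  using assms partition_covers by auto

lemma integrable_MQ: "Y \<in> L \<Longrightarrow> integrable MQ Y"
  using density integrable_density_mult ind_vector_lattice_measurable[OF lattice]
  by (subst integrable_density) (auto simp: prob_densities_def intro: AE_I2)

lemma admissible_paste:
  assumes "admissible \<xi>\<^sub>1" "admissible \<xi>\<^sub>2" "A \<in> sets G"
  shows "admissible (\<lambda>\<omega>. if \<omega> \<in> A then \<xi>\<^sub>1 \<omega> else \<xi>\<^sub>2 \<omega>)"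
proof -
  have L: "\<xi>\<^sub>1 \<in> L" "\<xi>\<^sub>2 \<in> L"
    using assms(1,2) by (auto simp: admissible_def)
  have "A \<in> sets M"
    using assms(3) subalg by (auto simp: subalgebra_def)
  then have paste_in_L: "(\<lambda>\<omega>. if \<omega> \<in> A then \<xi>\<^sub>1 \<omega> else \<xi>\<^sub>2 \<omega>) \<in> L"
    using lattice L by (rule ind_vector_lattice_paste[rotated 3])
  have "AE \<omega> in MQ. real_cond_exp MQ G (\<lambda>\<omega>. if \<omega> \<in> A then \<xi>\<^sub>1 \<omega> else \<xi>\<^sub>2 \<omega>) \<omega>
      = (if \<omega> \<in> A then real_cond_exp MQ G \<xi>\<^sub>1 \<omega> else real_cond_exp MQ G \<xi>\<^sub>2 \<omega>)"
    using sigma_finite_subalgebra_density[OF subalg density] assms(3) integrable_MQ L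
    by (intro real_cond_exp_paste) auto
  moreover have "AE \<omega> in MQ. real_cond_exp MQ G X \<omega> \<le> real_cond_exp MQ G \<xi>\<^sub>1 \<omega>"
    and "AE \<omega> in MQ. real_cond_exp MQ G X \<omega> \<le> real_cond_exp MQ G \<xi>\<^sub>2 \<omega>"
    using assms(1,2) by (auto simp: admissible_def)
  ultimately have "AE \<omega> in MQ. real_cond_exp MQ G X \<omega>
      \<le> real_cond_exp MQ G (\<lambda>\<omega>. if \<omega> \<in> A then \<xi>\<^sub>1 \<omega> else \<xi>\<^sub>2 \<omega>) \<omega>"
    by eventually_elim auto
  with paste_in_L show ?thesis
    unfolding admissible_def by blast
qed

lemma admissible_cellwise_min:
  assumes "admissible \<xi>\<^sub>1" "admissible \<xi>\<^sub>2"
  obtains \<xi> where "admissible \<xi>"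
    "\<And>B. B \<in> \<Gamma> \<Longrightarrow> ess_sup_on M B (\<pi> \<xi>) = min (ess_sup_on M B (\<pi> \<xi>\<^sub>1)) (ess_sup_on M B (\<pi> \<xi>\<^sub>2))"
proof
  define A where "A = \<Union>{B\<in>\<Gamma>. ess_sup_on M B (\<pi> \<xi>\<^sub>1) \<le> ess_sup_on M B (\<pi> \<xi>\<^sub>2)}"
  have A: "A \<in> sets G"
    unfolding A_def using finite_partition partition_sets by (intro sets.finite_Union) auto
  show "admissible (\<lambda>\<omega>. if \<omega> \<in> A then \<xi>\<^sub>1 \<omega> else \<xi>\<^sub>2 \<omega>)"
    using assms A by (rule admissible_paste)
  have reg: "AE \<omega> in M. \<pi> (\<lambda>\<omega>. if \<omega> \<in> A then \<xi>\<^sub>1 \<omega> else \<xi>\<^sub>2 \<omega>) \<omega> = (if \<omega> \<in> A then \<pi> \<xi>\<^sub>1 \<omega> else \<pi> \<xi>\<^sub>2 \<omega>)"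
    using regular assms A by (auto simp: admissible_def)
  show "ess_sup_on M B (\<pi> (\<lambda>\<omega>. if \<omega> \<in> A then \<xi>\<^sub>1 \<omega> else \<xi>\<^sub>2 \<omega>))
      = min (ess_sup_on M B (\<pi> \<xi>\<^sub>1)) (ess_sup_on M B (\<pi> \<xi>\<^sub>2))" if "B \<in> \<Gamma>" for B
    using partition_disjoint that reg unfolding A_def by (rule ess_sup_on_paste_cells)
qed

lemma down_directed_acc_set: "down_directed M (acc_set M G L \<Gamma> \<pi> X Q)"
  unfolding down_directed_def acc_set_eq
proof clarsimp
  fix \<xi>\<^sub>1 \<xi>\<^sub>2 assume "admissible \<xi>\<^sub>1" "admissible \<xi>\<^sub>2"
  then obtain \<xi> where \<xi>: "admissible \<xi>"
    "\<And>B. B \<in> \<Gamma> \<Longrightarrow> ess_sup_on M B (\<pi> \<xi>) = min (ess_sup_on M B (\<pi> \<xi>\<^sub>1)) (ess_sup_on M B (\<pi> \<xi>\<^sub>2))"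
    by (blast elim: admissible_cellwise_min)
  have "pi_Gamma M \<Gamma> \<pi> \<xi> \<omega> \<le> pi_Gamma M \<Gamma> \<pi> \<xi>\<^sub>1 \<omega> \<and> pi_Gamma M \<Gamma> \<pi> \<xi> \<omega> \<le> pi_Gamma M \<Gamma> \<pi> \<xi>\<^sub>2 \<omega>"
    if "\<omega> \<in> space M" for \<omega>
    using that by (rule in_some_cell) (simp add: pi_Gamma_cell \<xi>(2))
  then show "\<exists>\<xi>. admissible \<xi> \<and> (AE \<omega> in M. pi_Gamma M \<Gamma> \<pi> \<xi> \<omega> \<le> pi_Gamma M \<Gamma> \<pi> \<xi>\<^sub>1 \<omega>) \<and>
      (AE \<omega> in M. pi_Gamma M \<Gamma> \<pi> \<xi> \<omega> \<le> pi_Gamma M \<Gamma> \<pi> \<xi>\<^sub>2 \<omega>)"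
    using \<xi>(1) by (auto intro: AE_I2)
qed

lemma admissible_decreasing_approximation:
  obtains \<eta> where "\<And>m. admissible (\<eta> m)"
    and "\<And>\<omega>. \<omega> \<in> space M \<Longrightarrow> antimono (\<lambda>m. pi_Gamma M \<Gamma> \<pi> (\<eta> m) \<omega>)"
    and "\<And>\<omega>. \<omega> \<in> space M \<Longrightarrow> (\<lambda>m. pi_Gamma M \<Gamma> \<pi> (\<eta> m) \<omega>) \<longlonglongrightarrow> acc_inf \<omega>"
proof -
  have directed: "\<exists>\<xi>. admissible \<xi> \<and> (\<forall>B\<in>\<Gamma>. ess_sup_on M B (\<pi> \<xi>) \<le> ess_sup_on M B (\<pi> \<xi>\<^sub>1) \<and>
      ess_sup_on M B (\<pi> \<xi>) \<le> ess_sup_on M B (\<pi> \<xi>\<^sub>2))"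
    if "admissible \<xi>\<^sub>1" "admissible \<xi>\<^sub>2" for \<xi>\<^sub>1 \<xi>\<^sub>2
    using that by (rule admissible_cellwise_min) auto
  obtain \<eta> where \<eta>: "\<And>m. admissible (\<eta> m)"
    "\<And>B. B \<in> \<Gamma> \<Longrightarrow> decseq (\<lambda>m. ess_sup_on M B (\<pi> (\<eta> m)))"
    "\<And>B. B \<in> \<Gamma> \<Longrightarrow> (\<lambda>m. ess_sup_on M B (\<pi> (\<eta> m))) \<longlonglongrightarrow> cell_inf B"
    using directed_decreasing_approximation[where v = "\<lambda>B \<xi>. ess_sup_on M B (\<pi> \<xi>)",
        OF finite_partition admissible_X directed]
    unfolding cell_inf_def by blast
  show thesis
  proof (rule that[OF \<eta>(1)])
    fix \<omega> assume "\<omega> \<in> space M"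
    then obtain B where B: "B \<in> \<Gamma>" "\<omega> \<in> B"
      by (rule in_some_cell)
    show "antimono (\<lambda>m. pi_Gamma M \<Gamma> \<pi> (\<eta> m) \<omega>)"
      using \<eta>(2)[OF B(1)] by (simp add: pi_Gamma_cell[OF B])
    show "(\<lambda>m. pi_Gamma M \<Gamma> \<pi> (\<eta> m) \<omega>) \<longlonglongrightarrow> acc_inf \<omega>"
      using \<eta>(3)[OF B(1)] by (simp add: pi_Gamma_cell[OF B] acc_inf_cell[OF B])
  qed
qed

lemma acc_inf_measurable: "acc_inf \<in> borel_measurable M"
proof -
  have "(\<lambda>\<omega>. if \<omega> \<in> B then cell_inf B else 0) \<in> borel_measurable M" if "B \<in> \<Gamma>" for B
    using that partition_sets subalg by (intro measurable_If_set) (auto simp: subalgebra_def)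
  then show ?thesis
    unfolding acc_inf_def by (rule borel_measurable_ereal_sum)
qed

lemma is_ess_inf_acc_set: "is_ess_inf M (acc_set M G L \<Gamma> \<pi> X Q) acc_inf"
  unfolding is_ess_inf_def acc_set_eq
proof (intro conjI acc_inf_measurable ballI allI impI)
  fix Y assume "Y \<in> pi_Gamma M \<Gamma> \<pi> ` Collect admissible"
  then obtain \<xi> where \<xi>: "admissible \<xi>" "Y = pi_Gamma M \<Gamma> \<pi> \<xi>"
    by auto
  have "acc_inf \<omega> \<le> Y \<omega>" if "\<omega> \<in> space M" for \<omega>
    using that by (rule in_some_cell)
      (auto simp: \<xi>(2) pi_Gamma_cell acc_inf_cell cell_inf_def intro!: INF_lower \<xi>(1))
  then show "AE \<omega> in M. acc_inf \<omega> \<le> Y \<omega>"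
    by (rule AE_I2)
next
  fix K assume K: "K \<in> borel_measurable M \<and> (\<forall>Y\<in>pi_Gamma M \<Gamma> \<pi> ` Collect admissible. AE \<omega> in M. K \<omega> \<le> Y \<omega>)"
  obtain \<eta> where \<eta>: "\<And>m. admissible (\<eta> m)"
    "\<And>\<omega>. \<omega> \<in> space M \<Longrightarrow> antimono (\<lambda>m. pi_Gamma M \<Gamma> \<pi> (\<eta> m) \<omega>)"
    "\<And>\<omega>. \<omega> \<in> space M \<Longrightarrow> (\<lambda>m. pi_Gamma M \<Gamma> \<pi> (\<eta> m) \<omega>) \<longlonglongrightarrow> acc_inf \<omega>"
    using admissible_decreasing_approximation by blast
  have "\<forall>m. AE \<omega> in M. K \<omega> \<le> pi_Gamma M \<Gamma> \<pi> (\<eta> m) \<omega>"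
    using K \<eta>(1) by blast
  then have "AE \<omega> in M. \<forall>m. K \<omega> \<le> pi_Gamma M \<Gamma> \<pi> (\<eta> m) \<omega>"
    by (subst AE_all_countable)
  then show "AE \<omega> in M. K \<omega> \<le> acc_inf \<omega>"
  proof (rule AE_mp, intro AE_I2 impI)
    fix \<omega> assume "\<omega> \<in> space M" "\<forall>m. K \<omega> \<le> pi_Gamma M \<Gamma> \<pi> (\<eta> m) \<omega>"
    then show "K \<omega> \<le> acc_inf \<omega>"
      by (intro LIMSEQ_le_const[OF \<eta>(3)]) auto
  qed
qed

end

theorem lemma30:
  fixes M G :: "'a measure"
    and LF LG :: "('a \<Rightarrow> real) set"
    and \<pi> :: "('a \<Rightarrow> real) \<Rightarrow> ('a \<Rightarrow> real)"
    and \<Gamma> :: "'a set set"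
    and X Q :: "'a \<Rightarrow> real"
  assumes "prob_space M"
    and "subalgebra M G"
    and "ind_vector_lattice M (sets M) LF"
    and "ind_vector_lattice M (sets G) LG"
    and "\<forall>Y\<in>LF. \<pi> Y \<in> LG"
    and "\<forall>Y\<in>LF. \<forall>Z\<in>LF. (AE \<omega> in M. Y \<omega> = Z \<omega>) \<longrightarrow> (AE \<omega> in M. \<pi> Y \<omega> = \<pi> Z \<omega>)"
    and REG: "\<forall>Y\<in>LF. \<forall>Z\<in>LF. \<forall>A\<in>sets G.
       AE \<omega> in M. \<pi> (\<lambda>\<omega>'. if \<omega>' \<in> A then Y \<omega>' else Z \<omega>') \<omega> = (if \<omega> \<in> A then \<pi> Y \<omega> else \<pi> Z \<omega>)"
    and "finite \<Gamma>" "\<Gamma> \<subseteq> sets G" "disjoint \<Gamma>" "\<Union>\<Gamma> = space M" "{} \<notin> \<Gamma>"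
    and "X \<in> LF"
    and "Q \<in> order_cont_dual M LF \<inter> prob_densities M"
  shows "down_directed M (acc_set M G LF \<Gamma> \<pi> X Q) \<and>
    (\<exists>\<eta> :: nat \<Rightarrow> ('a \<Rightarrow> real). \<exists>K.
       is_ess_inf M (acc_set M G LF \<Gamma> \<pi> X Q) K \<and>
       (\<forall>m. \<eta> m \<in> LF \<and> (AE \<omega> in density M Q.
           real_cond_exp (density M Q) G (\<eta> m) \<omega> \<ge> real_cond_exp (density M Q) G X \<omega>)) \<and>
       (AE \<omega> in M. antimono (\<lambda>m. pi_Gamma M \<Gamma> \<pi> (\<eta> m) \<omega>) \<and>
                    (\<lambda>m. pi_Gamma M \<Gamma> \<pi> (\<eta> m) \<omega>) \<longlonglongrightarrow> K \<omega>))"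
proof -
  interpret regular_partition_setting M G LF \<pi> \<Gamma> X Q
    using assms by unfold_locales (auto simp: order_cont_dual_def)
  obtain \<eta> where \<eta>: "\<And>m. admissible (\<eta> m)"
    "\<And>\<omega>. \<omega> \<in> space M \<Longrightarrow> antimono (\<lambda>m. pi_Gamma M \<Gamma> \<pi> (\<eta> m) \<omega>)"
    "\<And>\<omega>. \<omega> \<in> space M \<Longrightarrow> (\<lambda>m. pi_Gamma M \<Gamma> \<pi> (\<eta> m) \<omega>) \<longlonglongrightarrow> acc_inf \<omega>"
    using admissible_decreasing_approximation by blast
  have "\<forall>m. \<eta> m \<in> LF \<and> (AE \<omega> in density M Q.
      real_cond_exp (density M Q) G (\<eta> m) \<omega> \<ge> real_cond_exp (density M Q) G X \<omega>)"
    using \<eta>(1) by (simp add: admissible_def)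
  moreover have "AE \<omega> in M. antimono (\<lambda>m. pi_Gamma M \<Gamma> \<pi> (\<eta> m) \<omega>) \<and>
      (\<lambda>m. pi_Gamma M \<Gamma> \<pi> (\<eta> m) \<omega>) \<longlonglongrightarrow> acc_inf \<omega>"
    using \<eta>(2,3) by (simp add: AE_I2)
  ultimately show ?thesis
    using down_directed_acc_set is_ess_inf_acc_set by blast
qed

end
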